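(* Let $\beta\in(0,1)$, let $c>0$ with $2c<1-\beta$, and set $$E_N=\Big\{\sum_{i=1}^{N} w_i^\beta\ge c^{-1}N^{1-\beta}\Big\}.$$ Then there exists $\eta>0$ such that $\mathbb P(E_N)=o(N^{-\eta})$ as $N\to\infty$.
   Context: $\Xi$ is a Poisson point process on $(0,\infty)$ with intensity measure $x^{-2}dx$, and $w_1>w_2>\cdots$ are its atoms listed in decreasing order. *)

theory Defs
  imports "HOL-Probability.Probability" "HOL-Library.Landau_Symbols"
begin

definition ppp_intensity :: "real measure" where
  "ppp_intensity = density lborel (\<lambda>x. indicator {0<..} x * ennreal (1 / x\<^sup>2))"

definition atom_count :: "(nat \<Rightarrow> real) \<Rightarrow> real set \<Rightarrow> nat" where
  "atom_count w A = card {i. w i \<in> A}"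

text \<open>w 0 > w 1 > ... are the atoms, in decreasing order, of a Poisson point process
  on (0,infinity) with intensity x^(-2) dx, defined on the probability space M.\<close>
definition ppp_atoms :: "'a measure \<Rightarrow> (nat \<Rightarrow> 'a \<Rightarrow> real) \<Rightarrow> bool" where
  "ppp_atoms M w \<longleftrightarrow>
     prob_space M \<and>
     (\<forall>i. w i \<in> borel_measurable M) \<and>
     (\<forall>\<omega>\<in>space M. (\<forall>i. 0 < w i \<omega>) \<and> (\<forall>i. w (Suc i) \<omega> < w i \<omega>) \<and>
                    (\<lambda>i. w i \<omega>) \<longlonglongrightarrow> 0) \<and>
     (\<forall>(J::nat set) (A::nat \<Rightarrow> real set) (a::real).
        finite J \<longrightarrow> 0 < a \<longrightarrow> (\<forall>j\<in>J. A j \<in> sets borel \<and> A j \<subseteq> {a..}) \<longrightarrow>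
        disjoint_family_on A J \<longrightarrow>
        prob_space.indep_vars M (\<lambda>_. count_space UNIV)
            (\<lambda>j \<omega>. atom_count (\<lambda>i. w i \<omega>) (A j)) J \<and>
        (\<forall>j\<in>J. \<forall>k::nat.
            prob_space.prob M {\<omega>\<in>space M. atom_count (\<lambda>i. w i \<omega>) (A j) = k}
              = exp (- measure ppp_intensity (A j)) * measure ppp_intensity (A j) ^ k / fact k))"

end

theory Submission
  imports Defs "HOL-Real_Asymp.Real_Asymp"
begin

text \<open>The number of atoms in \<open>[t,\<infinity>)\<close> is Poisson with mean \<open>1/t\<close>. Hence the largest atom exceeds \<open>y\<close>
  with probability at most \<open>1/y\<close>, and, by a Chernoff bound with parameter \<open>3/2\<close> for the Poisson count
  of mean \<open>(i+1)/2\<close>, the atom \<open>w i\<close> exceeds \<open>2/(i+1)\<close> with probability at most \<open>exp(-\<kappa>(i+1))\<close>,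
  where \<open>\<kappa> = ln(3/2) - 1/4 > 0\<close>. Outside these events, bounding the first \<open>k\<close> terms of the sum by
  \<open>y^\<beta>\<close> and the others by \<open>(2/(i+1))^\<beta>\<close> gives \<open>\<Sum> w i^\<beta> < k y^\<beta> + 2^\<beta> N^(1-\<beta>)/(1-\<beta>)\<close>.
  Since \<open>2^\<beta> < 2\<close> and \<open>2c < 1-\<beta>\<close>, the slack \<open>\<epsilon> = 1/c - 2^\<beta>/(1-\<beta>)\<close> is positive, and the choice
  \<open>k \<approx> N^((1-\<beta>)/2)\<close>, \<open>k y^\<beta> = \<epsilon> N^(1-\<beta>)\<close> makes both error probabilities polynomially small.\<close>

lemma nn_integral_poisson_pgf:
  fixes X :: "'a \<Rightarrow> nat"
  assumes "prob_space M" and X: "X \<in> measurable M (count_space UNIV)" and m: "0 \<le> m"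
    and dist: "\<And>k. prob_space.prob M {\<omega>\<in>space M. X \<omega> = k} = exp (- m) * m ^ k / fact k"
    and z: "0 \<le> z"
  shows "(\<integral>\<^sup>+ \<omega>. ennreal (z ^ X \<omega>) \<partial>M) = ennreal (exp (m * (z - 1)))"
proof -
  interpret prob_space M by fact
  have level_sets: "{\<omega>\<in>space M. X \<omega> = k} \<in> sets M" for k
    using X by measurable
  have "(\<integral>\<^sup>+ \<omega>. ennreal (z ^ X \<omega>) \<partial>M)
      = (\<integral>\<^sup>+ \<omega>. (\<Sum>k. ennreal (z ^ k) * indicator {\<omega>\<in>space M. X \<omega> = k} \<omega>) \<partial>M)"
  proof (intro nn_integral_cong)
    fix \<omega> assume "\<omega> \<in> space M"
    then have "(\<lambda>k. ennreal (z ^ k) * indicator {\<omega>\<in>space M. X \<omega> = k} \<omega>)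
             = (\<lambda>k. if k = X \<omega> then ennreal (z ^ k) else 0)"
      by (auto simp: indicator_def)
    then show "ennreal (z ^ X \<omega>) = (\<Sum>k. ennreal (z ^ k) * indicator {\<omega>\<in>space M. X \<omega> = k} \<omega>)"
      using sums_unique[OF sums_single[of "X \<omega>" "\<lambda>k. ennreal (z ^ k)"]] by simp
  qed
  also have "\<dots> = (\<Sum>k. ennreal (z ^ k) * emeasure M {\<omega>\<in>space M. X \<omega> = k})"
    using level_sets by (simp add: nn_integral_suminf nn_integral_cmult_indicator)
  also have "\<dots> = (\<Sum>k. ennreal (exp (- m) * (z * m) ^ k / fact k))"
    using dist z m by (simp add: emeasure_eq_measure ennreal_mult[symmetric] power_mult_distrib mult_ac)
  also have "\<dots> = ennreal (exp (m * (z - 1)))"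
  proof (rule suminf_ennreal_eq)
    show "0 \<le> exp (- m) * (z * m) ^ k / fact k" for k
      using z m by simp
    have "exp (- m) * exp (z * m) = exp (m * (z - 1))"
      by (simp add: mult_exp_exp algebra_simps)
    then show "(\<lambda>k. exp (- m) * (z * m) ^ k / fact k) sums exp (m * (z - 1))"
      using sums_mult[OF exp_converges[of "z * m"], of "exp (- m)"] by (simp add: scaleR_conv_of_real divide_inverse mult_ac)
  qed
  finally show ?thesis .
qed

lemma prob_poisson_ge_le:
  fixes X :: "'a \<Rightarrow> nat"
  assumes "prob_space M" and X: "X \<in> measurable M (count_space UNIV)" and "0 \<le> m"
    and "\<And>k. prob_space.prob M {\<omega>\<in>space M. X \<omega> = k} = exp (- m) * m ^ k / fact k"
    and z: "1 \<le> z"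
  shows "prob_space.prob M {\<omega>\<in>space M. a \<le> X \<omega>} \<le> exp (m * (z - 1)) / z ^ a"
proof -
  interpret prob_space M by fact
  have "emeasure M {\<omega>\<in>space M. a \<le> X \<omega>} = (\<integral>\<^sup>+ \<omega>. indicator {\<omega>\<in>space M. a \<le> X \<omega>} \<omega> \<partial>M)"
    using X by (intro nn_integral_indicator[symmetric]) measurable
  also have "\<dots> \<le> (\<integral>\<^sup>+ \<omega>. ennreal (1 / z ^ a) * ennreal (z ^ X \<omega>) \<partial>M)"
  proof (intro nn_integral_mono)
    fix \<omega>
    have "z ^ a \<le> z ^ X \<omega>" if "a \<le> X \<omega>"
      using z that by (simp add: power_increasing)
    then show "indicator {\<omega>\<in>space M. a \<le> X \<omega>} \<omega> \<le> ennreal (1 / z ^ a) * ennreal (z ^ X \<omega>)"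
      using z by (auto simp: indicator_def ennreal_mult[symmetric])
  qed
  also have "\<dots> = ennreal (1 / z ^ a) * (\<integral>\<^sup>+ \<omega>. ennreal (z ^ X \<omega>) \<partial>M)"
    by (rule nn_integral_cmult) (rule measurable_compose[OF X], simp)
  also have "\<dots> = ennreal (1 / z ^ a) * ennreal (exp (m * (z - 1)))"
    using nn_integral_poisson_pgf[OF assms(1-4) order_trans[OF zero_le_one z]] by simp
  also have "\<dots> = ennreal (exp (m * (z - 1)) / z ^ a)"
    using z by (simp add: ennreal_mult[symmetric])
  finally show ?thesis
    using z by (simp add: emeasure_eq_measure ennreal_le_iff)
qed

lemma Suc_powr_neg_le_diff_powr:
  fixes a \<beta> :: real
  assumes "0 \<le> a" and "0 < \<beta>" and "\<beta> < 1"
  shows "(a + 1) powr (- \<beta>) \<le> ((a + 1) powr (1 - \<beta>) - a powr (1 - \<beta>)) / (1 - \<beta>)"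
proof (cases "a = 0")
  case True
  then show ?thesis
    using assms by (simp add: le_divide_eq)
next
  case False
  define s b where "s = 1 - \<beta>" and "b = a + 1"
  have s: "0 < s" "s < 1" and a: "0 < a" and b: "0 < b"
    using assms False by (auto simp: s_def b_def)
  define q where "q = b powr (- \<beta>)"
  have b_powr: "b powr s = b * q"
    using b by (simp add: q_def s_def powr_diff powr_minus divide_inverse)
  have "(a / b) powr s * 1 powr (1 - s) \<le> s * (a / b) + (1 - s) * 1"
    by (rule Youngs_inequality_0) (use s a b in auto)
  then have "a powr s \<le> (s * (a / b) + (1 - s)) * b powr s"
    using a b by (simp add: powr_divide divide_le_eq)
  also have "\<dots> = b * q - s * q"
    unfolding b_powr using b by (simp add: field_simps b_def)
  finally have "s * q \<le> b powr s - a powr s"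
    unfolding b_powr by simp
  then have "q \<le> (b powr s - a powr s) / s"
    using s by (simp add: le_divide_eq mult.commute)
  then show ?thesis
    by (simp add: q_def b_def s_def)
qed

lemma sum_Suc_powr_neg_le:
  fixes \<beta> :: real
  assumes "0 < \<beta>" and "\<beta> < 1"
  shows "(\<Sum>i<N. real (Suc i) powr (- \<beta>)) \<le> real N powr (1 - \<beta>) / (1 - \<beta>)"
proof (induction N)
  case (Suc n)
  have "(\<Sum>i<Suc n. real (Suc i) powr (- \<beta>))
      \<le> real n powr (1 - \<beta>) / (1 - \<beta>) + real (Suc n) powr (- \<beta>)"
    using Suc.IH by simp
  also have "\<dots> \<le> real (Suc n) powr (1 - \<beta>) / (1 - \<beta>)"
    using Suc_powr_neg_le_diff_powr[of "real n" \<beta>] assms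
    unfolding of_nat_Suc add.commute[of 1] diff_divide_distrib by linarith
  finally show ?case .
qed simp

lemma atom_count_atLeast_ge:
  fixes v :: "nat \<Rightarrow> real"
  assumes "v \<longlonglongrightarrow> 0" and "0 < x" and "decseq v" and "x \<le> v n"
  shows "Suc n \<le> atom_count v {x..}"
proof -
  obtain n0 where n0: "\<And>i. n0 \<le> i \<Longrightarrow> v i < x"
    using order_tendstoD(2)[OF assms(1,2)] by (auto simp: eventually_sequentially)
  have "{i. v i \<in> {x..}} \<subseteq> {..<n0}"
    using n0 by (auto simp: not_less[symmetric])
  then have "finite {i. v i \<in> {x..}}"
    by (rule finite_subset) simp
  moreover have "{..n} \<subseteq> {i. v i \<in> {x..}}"
    using assms(3,4) by (auto dest: decseqD)
  ultimately show ?thesis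
    using card_mono[of "{i. v i \<in> {x..}}" "{..n}"] by (simp add: atom_count_def)
qed
lemma sum_powr_le_head_tail:
  fixes v :: "nat \<Rightarrow> real" and \<beta> :: real
  assumes "decseq v" and "\<And>i. 0 \<le> v i" and "0 < \<beta>" and "\<beta> < 1"
    and tail: "\<And>i. k \<le> i \<Longrightarrow> i < N \<Longrightarrow> v i \<le> 2 / real (Suc i)"
  shows "(\<Sum>i<N. v i powr \<beta>)
         \<le> real k * v 0 powr \<beta> + 2 powr \<beta> * real N powr (1 - \<beta>) / (1 - \<beta>)"
proof -
  have term_le: "v i powr \<beta> \<le> (if i < k then v 0 powr \<beta> else 0) + 2 powr \<beta> * real (Suc i) powr (- \<beta>)"
    if "i < N" for i
  proof -
    have "2 powr \<beta> * real (Suc i) powr (- \<beta>) = (2 / real (Suc i)) powr \<beta>"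
      using powr_divide[of 2 "real (Suc i)" \<beta>] by (simp add: powr_minus divide_inverse)
    moreover have "v i powr \<beta> \<le> (if i < k then v 0 else 2 / real (Suc i)) powr \<beta>"
      using tail[of i] decseqD[OF assms(1), of 0 i] that assms(2)[of i] assms(3)
      by (intro powr_mono2) auto
    ultimately show ?thesis
      by (cases "i < k") (auto intro: add_increasing2)
  qed
  have "(\<Sum>i<N. v i powr \<beta>)
      \<le> (\<Sum>i<N. (if i < k then v 0 powr \<beta> else 0) + 2 powr \<beta> * real (Suc i) powr (- \<beta>))"
    by (intro sum_mono term_le) simp
  also have "\<dots> = (\<Sum>i<N. if i < k then v 0 powr \<beta> else 0)
                   + 2 powr \<beta> * (\<Sum>i<N. real (Suc i) powr (- \<beta>))"
    by (simp only: sum.distrib sum_distrib_left)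
  also have "(\<Sum>i<N. if i < k then v 0 powr \<beta> else 0) \<le> real k * v 0 powr \<beta>"
  proof -
    have "card ({..<N} \<inter> {i. i < k}) \<le> card {..<k}"
      by (intro card_mono) auto
    then show ?thesis
      by (simp add: sum.If_cases mult_right_mono)
  qed
  also have "2 powr \<beta> * (\<Sum>i<N. real (Suc i) powr (- \<beta>)) \<le> 2 powr \<beta> * real N powr (1 - \<beta>) / (1 - \<beta>)"
    using mult_left_mono[OF sum_Suc_powr_neg_le[OF assms(3,4)], of "2 powr \<beta>"] by simp
  finally show ?thesis by simp
qed

lemma ppp_atoms_prob_space: "ppp_atoms M w \<Longrightarrow> prob_space M"
  by (simp add: ppp_atoms_def)

lemma measure_ppp_intensity_atLeast:
  assumes "0 < a"
  shows "measure ppp_intensity {a..} = 1 / a"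
proof -
  have "emeasure ppp_intensity {a..} = (\<integral>\<^sup>+ x. ennreal (indicator {a..} x * (1 / x ^ 2)) \<partial>lborel)"
    unfolding ppp_intensity_def using assms
    by (subst emeasure_density) (auto intro!: nn_integral_cong simp: indicator_def)
  also have "\<dots> = ennreal (1 / (real (2 - 1) * a ^ (2 - 1)))"
    by (rule nn_integral_has_integral_lebesgue[OF _ has_integral_inverse_power_to_inf])
       (use assms in auto)
  finally show ?thesis
    using assms by (simp add: measure_def)
qed

lemma ppp_atom_count_atLeast:
  assumes "ppp_atoms M w" and "0 < t"
  shows "(\<lambda>\<omega>. atom_count (\<lambda>i. w i \<omega>) {t..}) \<in> measurable M (count_space UNIV)"
    and "prob_space.prob M {\<omega>\<in>space M. atom_count (\<lambda>i. w i \<omega>) {t..} = k}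
           = exp (- (1 / t)) * (1 / t) ^ k / fact k"
proof -
  have "prob_space.indep_vars M (\<lambda>_. count_space UNIV)
          (\<lambda>j \<omega>. atom_count (\<lambda>i. w i \<omega>) {t..}) {0::nat} \<and>
        (\<forall>k. prob_space.prob M {\<omega>\<in>space M. atom_count (\<lambda>i. w i \<omega>) {t..} = k}
              = exp (- measure ppp_intensity {t..}) * measure ppp_intensity {t..} ^ k / fact k)"
    using assms unfolding ppp_atoms_def
    by (elim conjE allE[of _ "{0::nat}"] allE[of _ "\<lambda>_. {t..}"] allE[of _ t])
       (auto simp: disjoint_family_on_def)
  then show "(\<lambda>\<omega>. atom_count (\<lambda>i. w i \<omega>) {t..}) \<in> measurable M (count_space UNIV)"
    and "prob_space.prob M {\<omega>\<in>space M. atom_count (\<lambda>i. w i \<omega>) {t..} = k}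
           = exp (- (1 / t)) * (1 / t) ^ k / fact k"
    using assms measure_ppp_intensity_atLeast[of t]
    by (auto simp: prob_space.indep_vars_def[OF ppp_atoms_prob_space[OF assms(1)]])
qed

lemma ppp_prob_atom_atLeast_le:
  assumes "ppp_atoms M w" and "0 < t"
  shows "prob_space.prob M {\<omega>\<in>space M. 1 \<le> atom_count (\<lambda>i. w i \<omega>) {t..}} \<le> 1 / t"
proof -
  interpret prob_space M using ppp_atoms_prob_space[OF assms(1)] .
  note count = ppp_atom_count_atLeast[OF assms]
  have "{\<omega>\<in>space M. 1 \<le> atom_count (\<lambda>i. w i \<omega>) {t..}}
      = space M - {\<omega>\<in>space M. atom_count (\<lambda>i. w i \<omega>) {t..} = 0}"
    by auto
  then have "prob {\<omega>\<in>space M. 1 \<le> atom_count (\<lambda>i. w i \<omega>) {t..}} = 1 - exp (- (1 / t))"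
    using count by (simp add: prob_compl)
  also have "\<dots> \<le> 1 / t"
    using exp_ge_add_one_self[of "- (1 / t)"] by simp
  finally show ?thesis .
qed

lemma ppp_prob_many_atoms_atLeast_le:
  assumes "ppp_atoms M w"
  shows "prob_space.prob M {\<omega>\<in>space M. Suc i \<le> atom_count (\<lambda>i. w i \<omega>) {2 / real (Suc i)..}}
         \<le> exp (- (ln (3 / 2) - 1 / 4) * real (Suc i))"
proof -
  have t: "0 < 2 / real (Suc i)" by simp
  have "prob_space.prob M {\<omega>\<in>space M. Suc i \<le> atom_count (\<lambda>i. w i \<omega>) {2 / real (Suc i)..}}
      \<le> exp (real (Suc i) / 2 * (3 / 2 - 1)) / (3 / 2) ^ Suc i"
    using prob_poisson_ge_le[OF ppp_atoms_prob_space[OF assms] ppp_atom_count_atLeast(1)[OF assms t]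
                             _ ppp_atom_count_atLeast(2)[OF assms t], of "3 / 2" "Suc i"]
    by simp
  also have "(3 / 2 :: real) ^ Suc i = exp (real (Suc i) * ln (3 / 2))"
    by (simp only: exp_of_nat_mult) simp
  finally show ?thesis
    by (simp add: exp_diff[symmetric] algebra_simps)
qed

lemma ln_three_halves_gt: "1 / 4 < ln (3 / 2 :: real)"
proof -
  have "ln (2 / 3 :: real) \<le> 2 / 3 - 1"
    by (rule ln_le_minus_one) simp
  then show ?thesis
    by (simp add: ln_div)
qed

lemma ppp_large_sum_subset:
  assumes ppp: "ppp_atoms M w" and "0 < \<beta>" and "\<beta> < 1" and "1 \<le> k" and "0 < y"
    and T: "real k * y powr \<beta> + 2 powr \<beta> * real N powr (1 - \<beta>) / (1 - \<beta>) \<le> T"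
  shows "{\<omega>\<in>space M. T \<le> (\<Sum>i<N. w i \<omega> powr \<beta>)}
         \<subseteq> {\<omega>\<in>space M. 1 \<le> atom_count (\<lambda>i. w i \<omega>) {y..}}
           \<union> (\<Union>i\<in>{k..<N}. {\<omega>\<in>space M. Suc i \<le> atom_count (\<lambda>i. w i \<omega>) {2 / real (Suc i)..}})"
proof (intro subsetI, rule ccontr)
  fix \<omega> assume \<omega>: "\<omega> \<in> {\<omega>\<in>space M. T \<le> (\<Sum>i<N. w i \<omega> powr \<beta>)}"
    and not_bad: "\<omega> \<notin> {\<omega>\<in>space M. 1 \<le> atom_count (\<lambda>i. w i \<omega>) {y..}}
           \<union> (\<Union>i\<in>{k..<N}. {\<omega>\<in>space M. Suc i \<le> atom_count (\<lambda>i. w i \<omega>) {2 / real (Suc i)..}})"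
  have pos: "0 < w i \<omega>" and lim: "(\<lambda>i. w i \<omega>) \<longlonglongrightarrow> 0" and dec: "decseq (\<lambda>i. w i \<omega>)" for i
    using ppp \<omega> by (auto simp: ppp_atoms_def intro!: decseq_SucI less_imp_le)
  have "w 0 \<omega> < y"
    using atom_count_atLeast_ge[OF lim \<open>0 < y\<close> dec, of 0] not_bad \<omega> by force
  then have head: "real k * w 0 \<omega> powr \<beta> < real k * y powr \<beta>"
    using \<open>1 \<le> k\<close> pos[of 0] \<open>0 < \<beta>\<close> by (intro mult_strict_left_mono powr_less_mono2) auto
  have "w i \<omega> \<le> 2 / real (Suc i)" if "k \<le> i" "i < N" for i
    using atom_count_atLeast_ge[OF lim _ dec, of "2 / real (Suc i)" i] not_bad \<omega> that by force
  then have "(\<Sum>i<N. w i \<omega> powr \<beta>)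
      \<le> real k * w 0 \<omega> powr \<beta> + 2 powr \<beta> * real N powr (1 - \<beta>) / (1 - \<beta>)"
    using sum_powr_le_head_tail[OF dec less_imp_le[OF pos] assms(2,3)] by blast
  then show False
    using \<omega> T head by simp
qed

lemma ppp_prob_large_sum_le:
  assumes ppp: "ppp_atoms M w" and "0 < \<beta>" and "\<beta> < 1" and "1 \<le> k" and "0 < y"
    and "real k * y powr \<beta> + 2 powr \<beta> * real N powr (1 - \<beta>) / (1 - \<beta>) \<le> T"
  shows "prob_space.prob M {\<omega>\<in>space M. T \<le> (\<Sum>i<N. w i \<omega> powr \<beta>)}
         \<le> 1 / y + real N * exp (- (ln (3 / 2) - 1 / 4) * real k)"
proof -
  interpret prob_space M using ppp_atoms_prob_space[OF ppp] .
  define A where "A = {\<omega>\<in>space M. 1 \<le> atom_count (\<lambda>i. w i \<omega>) {y..}}"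
  define B where "B i = {\<omega>\<in>space M. Suc i \<le> atom_count (\<lambda>i. w i \<omega>) {2 / real (Suc i)..}}" for i
  have events: "A \<in> events" "B i \<in> events" for i
    using ppp_atom_count_atLeast(1)[OF ppp \<open>0 < y\<close>]
          ppp_atom_count_atLeast(1)[OF ppp, of "2 / real (Suc i)"]
    unfolding A_def B_def by measurable
  have "prob {\<omega>\<in>space M. T \<le> (\<Sum>i<N. w i \<omega> powr \<beta>)} \<le> prob (A \<union> (\<Union>i\<in>{k..<N}. B i))"
    using ppp_large_sum_subset[OF assms] events unfolding A_def B_def
    by (intro finite_measure_mono) auto
  also have "\<dots> \<le> prob A + prob (\<Union>i\<in>{k..<N}. B i)"
    using events by (intro measure_Un_le) auto
  also have "\<dots> \<le> prob A + (\<Sum>i\<in>{k..<N}. prob (B i))"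
    using events by (intro add_left_mono finite_measure_subadditive_finite) auto
  also have "\<dots> \<le> 1 / y + (\<Sum>i\<in>{k..<N}. exp (- (ln (3 / 2) - 1 / 4) * real k))"
  proof (intro add_mono sum_mono)
    show "prob A \<le> 1 / y"
      unfolding A_def by (rule ppp_prob_atom_atLeast_le[OF ppp \<open>0 < y\<close>])
    fix i assume "i \<in> {k..<N}"
    then have "exp (- (ln (3 / 2) - 1 / 4) * real (Suc i)) \<le> exp (- (ln (3 / 2) - 1 / 4) * real k)"
      using ln_three_halves_gt by (simp add: mult_left_mono)
    then show "prob (B i) \<le> exp (- (ln (3 / 2) - 1 / 4) * real k)"
      unfolding B_def using ppp_prob_many_atoms_atLeast_le[OF ppp, of i] by linarith
  qed
  also have "\<dots> \<le> 1 / y + real N * exp (- (ln (3 / 2) - 1 / 4) * real k)"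
    by (simp add: mult_right_mono)
  finally show ?thesis .
qed

lemma ppp_prob_large_sum_le_powr:
  assumes ppp: "ppp_atoms M w" and \<beta>: "0 < \<beta>" "\<beta> < 1" and "0 < \<epsilon>" and "1 \<le> N"
  shows "prob_space.prob M
           {\<omega>\<in>space M. (\<epsilon> + 2 powr \<beta> / (1 - \<beta>)) * real N powr (1 - \<beta>) \<le> (\<Sum>i<N. w i \<omega> powr \<beta>)}
         \<le> ((real N powr \<gamma> + 1) / (\<epsilon> * real N powr (1 - \<beta>))) powr (1 / \<beta>)
           + real N * exp (- (ln (3 / 2) - 1 / 4) * real N powr \<gamma>)"
proof -
  define k where "k = nat \<lceil>real N powr \<gamma>\<rceil>"
  define y where "y = (\<epsilon> * real N powr (1 - \<beta>) / real k) powr (1 / \<beta>)"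
  have k_ge: "real N powr \<gamma> \<le> real k" and k_le: "real k \<le> real N powr \<gamma> + 1"
    by (auto simp: k_def)
  have "1 \<le> k"
    using \<open>1 \<le> N\<close> by (simp add: k_def Suc_le_eq)
  have "0 < y"
    using \<open>1 \<le> k\<close> \<open>0 < \<epsilon>\<close> \<open>1 \<le> N\<close> by (simp add: y_def)
  have y_powr: "real k * y powr \<beta> = \<epsilon> * real N powr (1 - \<beta>)"
    using \<open>1 \<le> k\<close> \<open>0 < \<epsilon>\<close> \<open>1 \<le> N\<close> \<beta> by (simp add: y_def powr_powr)
  have "prob_space.prob M
          {\<omega>\<in>space M. (\<epsilon> + 2 powr \<beta> / (1 - \<beta>)) * real N powr (1 - \<beta>) \<le> (\<Sum>i<N. w i \<omega> powr \<beta>)}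
        \<le> 1 / y + real N * exp (- (ln (3 / 2) - 1 / 4) * real k)"
    by (rule ppp_prob_large_sum_le[OF ppp \<beta> \<open>1 \<le> k\<close> \<open>0 < y\<close>])
       (simp add: y_powr algebra_simps)
  also have "1 / y = (real k / (\<epsilon> * real N powr (1 - \<beta>))) powr (1 / \<beta>)"
    using \<open>1 \<le> k\<close> \<open>0 < \<epsilon>\<close> \<open>1 \<le> N\<close> by (simp add: y_def powr_divide)
  also have "\<dots> \<le> ((real N powr \<gamma> + 1) / (\<epsilon> * real N powr (1 - \<beta>))) powr (1 / \<beta>)"
    using k_le \<open>0 < \<epsilon>\<close> \<beta> by (intro powr_mono2 divide_right_mono) auto
  also have "exp (- (ln (3 / 2) - 1 / 4) * real k) \<le> exp (- (ln (3 / 2) - 1 / 4) * real N powr \<gamma>)"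
    using k_ge ln_three_halves_gt by simp
  finally show ?thesis
    by (simp add: mult_left_mono)
qed

lemma large_sum_prob_bound_smallo:
  fixes s \<beta> \<epsilon> \<kappa> :: real
  assumes "0 < s" and "0 < \<beta>" and "0 < \<epsilon>" and "0 < \<kappa>"
  shows "(\<lambda>N::nat. ((real N powr (s / 2) + 1) / (\<epsilon> * real N powr s)) powr (1 / \<beta>)
                    + real N * exp (- \<kappa> * real N powr (s / 2)))
         \<in> o(\<lambda>N. real N powr (- (s / (4 * \<beta>))))"
  using assms by real_asymp

lemma two_powr_div_less_inverse:
  fixes \<beta> c :: real
  assumes "0 < \<beta>" and "\<beta> < 1" and "0 < c" and "2 * c < 1 - \<beta>"
  shows "2 powr \<beta> / (1 - \<beta>) < 1 / c"
proof -
  have "2 powr \<beta> < 2 powr 1"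
    using assms by (intro powr_less_mono) auto
  then have "2 powr \<beta> / (1 - \<beta>) < 2 / (1 - \<beta>)"
    using assms by (simp add: divide_strict_right_mono)
  also have "2 / (1 - \<beta>) < 1 / c"
    using assms by (simp add: field_simps)
  finally show ?thesis .
qed

theorem lemma4p3:
  fixes M :: "'a measure" and w :: "nat \<Rightarrow> 'a \<Rightarrow> real" and \<beta> c :: real
  assumes "ppp_atoms M w"
    and "0 < \<beta>" and "\<beta> < 1"
    and "0 < c" and "2 * c < 1 - \<beta>"
  shows "\<exists>\<eta>>0. (\<lambda>N::nat. prob_space.prob M
            {\<omega>\<in>space M. (\<Sum>i<N. w i \<omega> powr \<beta>) \<ge> (1 / c) * real N powr (1 - \<beta>)})
          \<in> o(\<lambda>N. real N powr (- \<eta>))"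
proof (intro exI conjI)
  define \<epsilon> where "\<epsilon> = 1 / c - 2 powr \<beta> / (1 - \<beta>)"
  have "0 < \<epsilon>"
    using two_powr_div_less_inverse[OF assms(2-5)] by (simp add: \<epsilon>_def)
  have c_eq: "\<epsilon> + 2 powr \<beta> / (1 - \<beta>) = 1 / c"
    by (simp add: \<epsilon>_def)
  let ?P = "\<lambda>N::nat. prob_space.prob M
              {\<omega>\<in>space M. (\<Sum>i<N. w i \<omega> powr \<beta>) \<ge> (1 / c) * real N powr (1 - \<beta>)}"
  let ?g = "\<lambda>N::nat. ((real N powr ((1 - \<beta>) / 2) + 1) / (\<epsilon> * real N powr (1 - \<beta>))) powr (1 / \<beta>)
                      + real N * exp (- (ln (3 / 2) - 1 / 4) * real N powr ((1 - \<beta>) / 2))"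
  have "?P \<in> O(?g)"
  proof (rule bigoI[where c = 1])
    show "eventually (\<lambda>N. norm (?P N) \<le> 1 * norm (?g N)) sequentially"
      using eventually_ge_at_top[of 1]
    proof eventually_elim
      case (elim N)
      have "?P N \<le> ?g N"
        using ppp_prob_large_sum_le_powr[OF assms(1-3) \<open>0 < \<epsilon>\<close> elim, of "(1 - \<beta>) / 2"]
        unfolding c_eq .
      then show ?case
        by (simp add: abs_of_nonneg order_trans[OF _ abs_ge_self])
    qed
  qed
  moreover have "?g \<in> o(\<lambda>N. real N powr (- ((1 - \<beta>) / (4 * \<beta>))))"
    using large_sum_prob_bound_smallo[of "1 - \<beta>" \<beta> \<epsilon> "ln (3 / 2) - 1 / 4"]
          ln_three_halves_gt \<open>0 < \<epsilon>\<close> assms(2,3) by linarith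
  ultimately show "?P \<in> o(\<lambda>N. real N powr (- ((1 - \<beta>) / (4 * \<beta>))))"
    by (rule landau_o.big_small_trans)
  show "0 < (1 - \<beta>) / (4 * \<beta>)"
    using assms by simp
qed

end
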